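(* Let $G,H,L\colon\mathbb{R}^n\to\mathbb{R}^n$ be positive semidefinite linear maps and let $k\in\{1,\dots,n\}$. Assume that $$\left\langle\left(\wedge^k G+\wedge^k H\right)\xi,\xi\right\rangle=\left\langle\left(\wedge^k L\right)\xi,\xi\right\rangle$$ for all decomposable $\xi\in\bigwedge^k\mathbb{R}^n$. Then $\wedge^k G+\wedge^k H=\wedge^k L$.
   Context: $\bigwedge^k\mathbb{R}^n$ is the $k$-th exterior power with the inner product determined by $\langle u_1\wedge\dots\wedge u_k, v_1\wedge\dots\wedge v_k\rangle=\det(\langle u_i,v_j\rangle)_{i,j=1}^k$. For a linear map $A$, $\wedge^k A$ is the induced linear map on $\bigwedge^k\mathbb{R}^n$ with $(\wedge^kA)(v_1\wedge\dots\wedge v_k)=Av_1\wedge\dots\wedge Av_k$. A $k$-vector is decomposable if it is of the form $v_1\wedge\dots\wedge v_k$. *)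

theory Defs
  imports "HOL-Analysis.Analysis"
begin

text \<open>Concrete model: R^n is represented by functions nat => real (only coordinates < n matter),
linear maps R^n -> R^n by their matrices (nat => nat => real, entries with indices < n) in the
standard basis.  The k-th exterior power is represented in its standard orthonormal basis
e_I = e_{i_1} wedge ... wedge e_{i_k}, indexed by the k-element subsets I of {0..<n}
(elements listed in increasing order).\<close>

definition ksubsets :: "nat \<Rightarrow> nat \<Rightarrow> nat set set" where
  "ksubsets n k = {I. I \<subseteq> {..<n} \<and> card I = k}"

definition ldet :: "nat \<Rightarrow> (nat \<Rightarrow> nat \<Rightarrow> real) \<Rightarrow> real" where
  "ldet k M = (\<Sum>p\<in>{p. p permutes {..<k}}. of_int (sign p) * (\<Prod>i<k. M i (p i)))"

text \<open>Matrix entry (I,J) of wedge^k A: the minor det(A[I,J]).\<close>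
definition ext_pow :: "nat \<Rightarrow> (nat \<Rightarrow> nat \<Rightarrow> real) \<Rightarrow> nat set \<Rightarrow> nat set \<Rightarrow> real" where
  "ext_pow k A I J = ldet k (\<lambda>a b. A (sorted_list_of_set I ! a) (sorted_list_of_set J ! b))"

text \<open>Coordinates of the decomposable k-vector v_0 wedge ... wedge v_{k-1}:
 <v_0 wedge ... wedge v_{k-1}, e_I> = det(<v_a, e_{I_b}>).\<close>
definition wedge :: "nat \<Rightarrow> (nat \<Rightarrow> nat \<Rightarrow> real) \<Rightarrow> nat set \<Rightarrow> real" where
  "wedge k vs I = ldet k (\<lambda>a b. vs a (sorted_list_of_set I ! b))"

definition ext_apply :: "nat \<Rightarrow> nat \<Rightarrow> (nat set \<Rightarrow> nat set \<Rightarrow> real) \<Rightarrow> (nat set \<Rightarrow> real) \<Rightarrow> nat set \<Rightarrow> real" where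
  "ext_apply n k M xi = (\<lambda>I. \<Sum>J\<in>ksubsets n k. M I J * xi J)"

definition ext_inner :: "nat \<Rightarrow> nat \<Rightarrow> (nat set \<Rightarrow> real) \<Rightarrow> (nat set \<Rightarrow> real) \<Rightarrow> real" where
  "ext_inner n k xi eta = (\<Sum>I\<in>ksubsets n k. xi I * eta I)"

definition psd :: "nat \<Rightarrow> (nat \<Rightarrow> nat \<Rightarrow> real) \<Rightarrow> bool" where
  "psd n A \<longleftrightarrow> (\<forall>i<n. \<forall>j<n. A i j = A j i) \<and>
     (\<forall>x::nat \<Rightarrow> real. 0 \<le> (\<Sum>i<n. \<Sum>j<n. x i * A i j * x j))"

end

theory Submission
  imports Defs
begin

text \<open>A symmetric matrix is a linear combination of rank-one matrices \<open>v v\<^sup>T\<close> (polarisation,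
with \<open>v = e\<^sub>p \<plusminus> e\<^sub>q\<close>).  Expanding \<open>k! det\<close> of such a combination multilinearly, in the manner of
Cauchy-Binet, shows that \<open>\<wedge>\<^sup>k\<close> of it is a linear combination of rank-one matrices \<open>\<xi> \<xi>\<^sup>T\<close> with \<open>\<xi>\<close>
decomposable.  Hence \<open>D = \<wedge>\<^sup>k G + \<wedge>\<^sup>k H - \<wedge>\<^sup>k L\<close> satisfies \<open>k! D = \<Sum>\<^sub>f \<lambda>\<^sub>f \<xi>\<^sub>f \<xi>\<^sub>f\<^sup>T\<close>, so its squared
Frobenius norm is \<open>\<Sum>\<^sub>f \<lambda>\<^sub>f \<langle>D \<xi>\<^sub>f, \<xi>\<^sub>f\<rangle> / k!\<close>, which vanishes by hypothesis.\<close>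

lemma ldet_permute_rows:
  assumes q: "q permutes {..<k}"
  shows "(\<Sum>p | p permutes {..<k}. of_int (sign p) * (\<Prod>a<k. M (q a) (p a)))
         = of_int (sign q) * ldet k M"
proof -
  have inv_q: "inv q permutes {..<k}" using q by (rule permutes_inv)
  have perm_q: "permutation q" using q by (metis finite_lessThan permutation_permutes)
  have perm_inv_q: "permutation (inv q)" using inv_q by (metis finite_lessThan permutation_permutes)
  have "ldet k M = (\<Sum>p | p permutes {..<k}. of_int (sign (p \<circ> inv q)) * (\<Prod>i<k. M i ((p \<circ> inv q) i)))"
    unfolding ldet_def by (rule sum_permutations_compose_right[OF inv_q])
  also have "\<dots> = (\<Sum>p | p permutes {..<k}. of_int (sign q) * (of_int (sign p) * (\<Prod>a<k. M (q a) (p a))))"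
  proof (rule sum.cong[OF refl])
    fix p assume "p \<in> {p. p permutes {..<k}}"
    then have "permutation p" by (metis finite_lessThan permutation_permutes mem_Collect_eq)
    then have sign: "sign (p \<circ> inv q) = sign p * sign q"
      using sign_compose[OF _ perm_inv_q] sign_inverse[OF perm_q] by simp
    have "(\<Prod>i<k. M i ((p \<circ> inv q) i)) = (\<Prod>a<k. M (q a) ((p \<circ> inv q) (q a)))"
      using prod.reindex_bij_betw[OF permutes_imp_bij[OF q], of "\<lambda>i. M i ((p \<circ> inv q) i)"]
      by simp
    also have "\<dots> = (\<Prod>a<k. M (q a) (p a))"
      using permutes_inverses(2)[OF q] by simp
    finally show "of_int (sign (p \<circ> inv q)) * (\<Prod>i<k. M i ((p \<circ> inv q) i)) =
         of_int (sign q) * (of_int (sign p) * (\<Prod>a<k. M (q a) (p a)))"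
      by (simp add: sign)
  qed
  also have "\<dots> = of_int (sign q) * (\<Sum>p | p permutes {..<k}. of_int (sign p) * (\<Prod>a<k. M (q a) (p a)))"
    by (simp add: sum_distrib_left)
  finally show ?thesis
    by (metis (no_types, lifting) mult.assoc mult_1 of_int_1 of_int_mult sign_idempotent)
qed

lemma fact_mult_ldet:
  "fact k * ldet k M = (\<Sum>q | q permutes {..<k}. \<Sum>p | p permutes {..<k}.
      of_int (sign q) * of_int (sign p) * (\<Prod>a<k. M (q a) (p a)))"
proof -
  let ?P = "{p. p permutes {..<k}}"
  have "fact k * ldet k M = (\<Sum>q\<in>?P. of_int (sign q) * (of_int (sign q) * ldet k M))"
    by (simp add: card_permutations sign_idempotent flip: mult.assoc of_int_mult)
  also have "\<dots> = (\<Sum>q\<in>?P. \<Sum>p\<in>?P. of_int (sign q) * of_int (sign p) * (\<Prod>a<k. M (q a) (p a)))"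
    by (intro sum.cong refl)
      (simp add: ldet_permute_rows sum_distrib_left mult.assoc flip: ldet_permute_rows)
  finally show ?thesis .
qed

lemma fact_mult_ldet_sum_rank_one:
  fixes lam :: "'r \<Rightarrow> real" and u w :: "'r \<Rightarrow> nat \<Rightarrow> real"
  assumes R: "finite R"
    and M: "\<And>a b. a < k \<Longrightarrow> b < k \<Longrightarrow> M a b = (\<Sum>r\<in>R. lam r * u r a * w r b)"
  shows "fact k * ldet k M = (\<Sum>f\<in>PiE {..<k} (\<lambda>_. R).
           (\<Prod>a<k. lam (f a)) * ldet k (\<lambda>a b. u (f a) b) * ldet k (\<lambda>a b. w (f a) b))"
proof -
  let ?P = "{p. p permutes {..<k}}"
  let ?F = "PiE {..<k} (\<lambda>_. R)"
  let ?term = "\<lambda>f q p. of_int (sign q) * of_int (sign p) *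
        ((\<Prod>a<k. lam (f a)) * (\<Prod>a<k. u (f a) (q a)) * (\<Prod>a<k. w (f a) (p a)))"
  have expand: "(\<Prod>a<k. M (q a) (p a)) =
      (\<Sum>f\<in>?F. (\<Prod>a<k. lam (f a)) * (\<Prod>a<k. u (f a) (q a)) * (\<Prod>a<k. w (f a) (p a)))"
    if "q \<in> ?P" "p \<in> ?P" for q p
  proof -
    have "(\<Prod>a<k. M (q a) (p a)) = (\<Prod>a<k. \<Sum>r\<in>R. lam r * u r (q a) * w r (p a))"
      using that by (intro prod.cong refl M) (auto dest: permutes_in_image)
    also have "\<dots> = (\<Sum>f\<in>?F. \<Prod>a<k. lam (f a) * u (f a) (q a) * w (f a) (p a))"
      by (rule prod_sum_PiE) (auto simp: R)
    finally show ?thesis by (simp add: prod.distrib)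
  qed
  have "fact k * ldet k M = (\<Sum>q\<in>?P. \<Sum>p\<in>?P. \<Sum>f\<in>?F. ?term f q p)"
    unfolding fact_mult_ldet by (intro sum.cong refl) (simp add: expand sum_distrib_left)
  also have "\<dots> = (\<Sum>f\<in>?F. \<Sum>q\<in>?P. \<Sum>p\<in>?P. ?term f q p)"
    by (subst sum.swap) (simp add: sum.swap[of _ ?P ?F])
  also have "\<dots> = (\<Sum>f\<in>?F.
           (\<Prod>a<k. lam (f a)) * ldet k (\<lambda>a b. u (f a) b) * ldet k (\<lambda>a b. w (f a) b))"
    unfolding ldet_def
    by (intro sum.cong refl) (simp add: sum_distrib_left sum_distrib_right mult_ac)
  finally show ?thesis .
qed

text \<open>The index \<open>(p, q, b)\<close> stands for the rank-one matrix \<open>\<plusminus>G\<^sub>p\<^sub>q/4 (e\<^sub>p \<plusminus> e\<^sub>q)(e\<^sub>p \<plusminus> e\<^sub>q)\<^sup>T\<close>,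
the sign being chosen by \<open>b\<close>; the two signs together give \<open>G\<^sub>p\<^sub>q/2 (e\<^sub>p e\<^sub>q\<^sup>T + e\<^sub>q e\<^sub>p\<^sup>T)\<close>.\<close>

definition polar_coeff :: "(nat \<Rightarrow> nat \<Rightarrow> real) \<Rightarrow> nat \<times> nat \<times> bool \<Rightarrow> real" where
  "polar_coeff G = (\<lambda>(p, q, b). (if b then 1 else -1) * G p q / 4)"

definition polar_vec :: "nat \<times> nat \<times> bool \<Rightarrow> nat \<Rightarrow> real" where
  "polar_vec = (\<lambda>(p, q, b) i. of_bool (i = p) + (if b then 1 else -1) * of_bool (i = q))"

lemma sum_bool_polar:
  "(\<Sum>b\<in>UNIV. polar_coeff G (p, q, b) * polar_vec (p, q, b) i * polar_vec (p, q, b) j)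
   = (if p = i \<and> q = j then G p q / 2 else 0) + (if p = j \<and> q = i then G p q / 2 else 0)"
  by (cases "p = i"; cases "q = j"; cases "p = j"; cases "q = i")
    (simp_all add: UNIV_bool polar_coeff_def polar_vec_def)

lemma sum_sum_delta:
  fixes f :: "nat \<Rightarrow> nat \<Rightarrow> 'a::comm_monoid_add"
  assumes "i < n" "j < n"
  shows "(\<Sum>p<n. \<Sum>q<n. if p = i \<and> q = j then f p q else 0) = f i j"
proof -
  have "(\<Sum>q<n. if p = i \<and> q = j then f p q else 0) = (if p = i then f p j else 0)" for p
    using assms by (simp add: sum.delta')
  then show ?thesis using assms by (simp add: sum.delta')
qed

lemma symmetric_eq_sum_polar:
  fixes G :: "nat \<Rightarrow> nat \<Rightarrow> real"
  assumes sym: "\<forall>i<n. \<forall>j<n. G i j = G j i" and i: "i < n" and j: "j < n"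
  shows "G i j = (\<Sum>r\<in>{..<n} \<times> {..<n} \<times> UNIV. polar_coeff G r * polar_vec r i * polar_vec r j)"
proof -
  have "(\<Sum>r\<in>{..<n} \<times> {..<n} \<times> UNIV. polar_coeff G r * polar_vec r i * polar_vec r j)
     = (\<Sum>p<n. \<Sum>q<n. \<Sum>b\<in>UNIV. polar_coeff G (p, q, b) * polar_vec (p, q, b) i * polar_vec (p, q, b) j)"
    by (simp add: sum.cartesian_product)
  also have "\<dots> = (\<Sum>p<n. \<Sum>q<n. if p = i \<and> q = j then G p q / 2 else 0)
                 + (\<Sum>p<n. \<Sum>q<n. if p = j \<and> q = i then G p q / 2 else 0)"
    by (simp only: sum_bool_polar sum.distrib)
  also have "\<dots> = G i j"
    using sym i j by (simp add: sum_sum_delta)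
  finally show ?thesis ..
qed

lemma finite_ksubsets: "finite (ksubsets n k)"
  by (rule finite_subset[of _ "Pow {..<n}"]) (auto simp: ksubsets_def)

lemma ksubsets_nth_less:
  assumes "I \<in> ksubsets n k" "a < k"
  shows "sorted_list_of_set I ! a < n"
proof -
  have I: "I \<subseteq> {..<n}" "card I = k" "finite I"
    using assms(1) finite_subset by (auto simp: ksubsets_def)
  then have "sorted_list_of_set I ! a \<in> I"
    using assms(2) by (metis length_sorted_list_of_set nth_mem set_sorted_list_of_set)
  then show ?thesis using I by auto
qed

lemma fact_mult_ext_pow_eq_sum_wedge:
  assumes "\<forall>i<n. \<forall>j<n. G i j = G j i" and I: "I \<in> ksubsets n k" and J: "J \<in> ksubsets n k"
  shows "fact k * ext_pow k G I J = (\<Sum>f\<in>PiE {..<k} (\<lambda>_. {..<n} \<times> {..<n} \<times> UNIV).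
     (\<Prod>a<k. polar_coeff G (f a)) * wedge k (\<lambda>a. polar_vec (f a)) I * wedge k (\<lambda>a. polar_vec (f a)) J)"
  unfolding ext_pow_def wedge_def
  by (rule fact_mult_ldet_sum_rank_one)
    (auto intro!: symmetric_eq_sum_polar[OF assms(1)] ksubsets_nth_less[OF I] ksubsets_nth_less[OF J])

lemma ext_inner_ext_apply:
  "ext_inner n k (ext_apply n k M xi) xi = (\<Sum>I\<in>ksubsets n k. \<Sum>J\<in>ksubsets n k. M I J * (xi I * xi J))"
  by (simp add: ext_inner_def ext_apply_def sum_distrib_left sum_distrib_right mult_ac)

lemma eq_0_if_orthogonal_to_rank_one_terms:
  fixes N :: "'i \<Rightarrow> 'i \<Rightarrow> real" and w :: "'f \<Rightarrow> 'i \<Rightarrow> real"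
  assumes K: "finite K" and "c \<noteq> 0"
    and comb: "\<And>I J. I \<in> K \<Longrightarrow> J \<in> K \<Longrightarrow> c * N I J = (\<Sum>f\<in>F. lam f * (w f I * w f J))"
    and orth: "\<And>f. f \<in> F \<Longrightarrow> (\<Sum>I\<in>K. \<Sum>J\<in>K. N I J * (w f I * w f J)) = 0"
    and "I \<in> K" "J \<in> K"
  shows "N I J = 0"
proof -
  have "c * (\<Sum>I\<in>K. \<Sum>J\<in>K. N I J * N I J) = (\<Sum>I\<in>K. \<Sum>J\<in>K. N I J * (c * N I J))"
    by (simp add: sum_distrib_left mult.left_commute)
  also have "\<dots> = (\<Sum>I\<in>K. \<Sum>J\<in>K. \<Sum>f\<in>F. lam f * (N I J * (w f I * w f J)))"
    by (intro sum.cong refl) (simp add: comb sum_distrib_left mult.left_commute)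
  also have "\<dots> = (\<Sum>f\<in>F. lam f * (\<Sum>I\<in>K. \<Sum>J\<in>K. N I J * (w f I * w f J)))"
    by (simp add: sum_distrib_left sum.swap[of _ K F] sum.swap[of _ K F] mult.assoc)
  also have "\<dots> = 0"
    by (simp add: orth)
  finally have "(\<Sum>I\<in>K. \<Sum>J\<in>K. N I J * N I J) = 0"
    using \<open>c \<noteq> 0\<close> by simp
  then show ?thesis
    using K \<open>I \<in> K\<close> \<open>J \<in> K\<close> by (simp add: sum_nonneg_eq_0_iff sum_nonneg)
qed

theorem lemma3p1:
  fixes n k :: nat and G H L :: "nat \<Rightarrow> nat \<Rightarrow> real"
  assumes "psd n G" and "psd n H" and "psd n L"
    and "1 \<le> k" and "k \<le> n"
    and "\<forall>vs. ext_inner n k (ext_apply n k (\<lambda>I J. ext_pow k G I J + ext_pow k H I J) (wedge k vs)) (wedge k vs)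
             = ext_inner n k (ext_apply n k (ext_pow k L) (wedge k vs)) (wedge k vs)"
  shows "\<forall>I\<in>ksubsets n k. \<forall>J\<in>ksubsets n k. ext_pow k G I J + ext_pow k H I J = ext_pow k L I J"
proof -
  have sym: "\<forall>i<n. \<forall>j<n. A i j = A j i" if "psd n A" for A
    using that by (simp add: psd_def)
  define N where "N I J = ext_pow k G I J + ext_pow k H I J - ext_pow k L I J" for I J
  define w where "w f = wedge k (\<lambda>a. polar_vec (f a))" for f :: "nat \<Rightarrow> nat \<times> nat \<times> bool"
  define lam where "lam f = (\<Prod>a<k. polar_coeff G (f a)) + (\<Prod>a<k. polar_coeff H (f a))
    - (\<Prod>a<k. polar_coeff L (f a))" for f :: "nat \<Rightarrow> nat \<times> nat \<times> bool"
  have comb: "fact k * N I J = (\<Sum>f\<in>PiE {..<k} (\<lambda>_. {..<n} \<times> {..<n} \<times> UNIV). lam f * (w f I * w f J))"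
    if "I \<in> ksubsets n k" "J \<in> ksubsets n k" for I J
    using fact_mult_ext_pow_eq_sum_wedge[OF sym that] assms(1-3)
    by (simp add: N_def lam_def w_def algebra_simps sum.distrib sum_subtractf)
  have orth: "(\<Sum>I\<in>ksubsets n k. \<Sum>J\<in>ksubsets n k. N I J * (w f I * w f J)) = 0" for f
    using assms(6)[rule_format, of "\<lambda>a. polar_vec (f a)"]
    by (simp add: ext_inner_ext_apply N_def w_def left_diff_distrib sum_subtractf)
  show ?thesis
    using eq_0_if_orthogonal_to_rank_one_terms[OF finite_ksubsets _ comb orth] by (simp add: N_def)
qed

end
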